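(* Let $\mathbf T:=\mathbf T_0^{\otimes m}$ with rows and columns indexed by $\mathcal X=\{0,1\}^m$. For $\sigma\in\mathcal S_m$ let $\mathbf P_\sigma$ be the permutation matrix with $\mathbf P_\sigma\mathbf e_{(x_1,\dots,x_m)}=\mathbf e_{(x_{\sigma(1)},\dots,x_{\sigma(m)})}$ for all $(x_1,\dots,x_m)\in\mathcal X$. Then $$\mathrm{Aut}(\mathbf T)=\{\mathbf P_\sigma:\sigma\in\mathcal S_m\},$$ and consequently $\mathrm{Aut}(\mathbf T)\cong\mathcal S_m$ and $|\mathrm{Aut}(\mathbf T)|=m!$.
   Context: $\mathbf T_0=\begin{pmatrix}1&0\\1&1\end{pmatrix}$; rows/columns of $\mathbf T_0^{\otimes m}$ are indexed by $x\in\{0,1\}^m$ via the Kronecker rule $(\mathbf A\otimes\mathbf B)_{(x_1,x'),(y_1,y')}=\mathbf A_{x_1,y_1}\mathbf B_{x',y'}$. $\mathrm{Aut}(\mathbf T)$ is the set of permutation matrices $\mathbf P$ with $\mathbf P^\top\mathbf T\mathbf P=\mathbf T$. $\mathcal S_m$ is the symmetric group on $[m]$; $\mathbf e_x$ is the standard basis vector indexed by $x$. *)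

theory Defs
  imports "HOL-Algebra.Sym_Groups"
begin

text \<open>Index set X = {0,1}^m, encoded as boolean lists of length m
  (False = 0, True = 1; list position i-1 holds coordinate x_i).
  Square matrices indexed by X are functions X => X => int, required to
  vanish outside X x X.\<close>

definition idx :: "nat \<Rightarrow> bool list set" where
  "idx m = {x. length x = m}"

definition bit :: "bool \<Rightarrow> nat" where
  "bit b = (if b then 1 else 0)"

definition T0 :: "nat \<Rightarrow> nat \<Rightarrow> int" where
  "T0 a b = (if (a, b) = (0, 1) then 0 else 1)"

text \<open>Kronecker power T0^{\<otimes>m} via the Kronecker rule.\<close>
definition Tm :: "nat \<Rightarrow> bool list \<Rightarrow> bool list \<Rightarrow> int" where
  "Tm m x y = (if x \<in> idx m \<and> y \<in> idx m
     then (\<Prod>i<m. T0 (bit (x ! i)) (bit (y ! i))) else 0)"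

definition mmul :: "nat \<Rightarrow> (bool list \<Rightarrow> bool list \<Rightarrow> int) \<Rightarrow> (bool list \<Rightarrow> bool list \<Rightarrow> int)
    \<Rightarrow> bool list \<Rightarrow> bool list \<Rightarrow> int" where
  "mmul m A B = (\<lambda>x y. if x \<in> idx m \<and> y \<in> idx m then (\<Sum>z\<in>idx m. A x z * B z y) else 0)"

definition mtrans :: "(bool list \<Rightarrow> bool list \<Rightarrow> int) \<Rightarrow> bool list \<Rightarrow> bool list \<Rightarrow> int" where
  "mtrans A = (\<lambda>x y. A y x)"

definition mone :: "nat \<Rightarrow> bool list \<Rightarrow> bool list \<Rightarrow> int" where
  "mone m = (\<lambda>x y. if x \<in> idx m \<and> y = x then 1 else 0)"

definition perm_matrix :: "nat \<Rightarrow> (bool list \<Rightarrow> bool list \<Rightarrow> int) \<Rightarrow> bool" where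
  "perm_matrix m P \<longleftrightarrow>
     (\<forall>x y. P x y = 0 \<or> P x y = 1) \<and>
     (\<forall>x y. \<not> (x \<in> idx m \<and> y \<in> idx m) \<longrightarrow> P x y = 0) \<and>
     (\<forall>x\<in>idx m. \<exists>!y. y \<in> idx m \<and> P x y = 1) \<and>
     (\<forall>y\<in>idx m. \<exists>!x. x \<in> idx m \<and> P x y = 1)"

definition Aut :: "nat \<Rightarrow> (bool list \<Rightarrow> bool list \<Rightarrow> int) \<Rightarrow> (bool list \<Rightarrow> bool list \<Rightarrow> int) set" where
  "Aut m T = {P. perm_matrix m P \<and> mmul m (mtrans P) (mmul m T P) = T}"

definition Aut_group :: "nat \<Rightarrow> (bool list \<Rightarrow> bool list \<Rightarrow> int) \<Rightarrow> (bool list \<Rightarrow> bool list \<Rightarrow> int) monoid" where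
  "Aut_group m T = \<lparr> carrier = Aut m T, mult = mmul m, one = mone m \<rparr>"

definition Psig :: "nat \<Rightarrow> (nat \<Rightarrow> nat) \<Rightarrow> bool list \<Rightarrow> bool list \<Rightarrow> int" where
  "Psig m \<sigma> = (\<lambda>y x. if x \<in> idx m \<and> y \<in> idx m \<and> y = map (\<lambda>i. x ! (\<sigma> i - 1)) [1..<m+1]
                      then 1 else 0)"

end

theory Submission
  imports Defs
begin

(* T(x,y) = 1 exactly when y <= x coordinatewise, so T is the order relation of the Boolean
   lattice {0,1}^m.  Conjugating T by the permutation matrix of a bijection f of {0,1}^m relabels
   its rows and columns by f, hence that matrix lies in Aut(T) iff f is an order automorphism of
   the lattice.  Such an automorphism fixes the bottom element and permutes the atoms e_j; as the
   bits of x record which atoms lie below x, it is the coordinate permutation induced on the atoms.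
   Conversely every coordinate permutation is an order automorphism, so sigma |-> P_(sigma^-1)
   is an isomorphism from S_m onto Aut(T), and the cardinality m! is read off from it. *)

lemma finite_idx: "finite (idx m)"
  using finite_lists_length_eq[of "UNIV :: bool set" m] by (simp add: idx_def)

definition bits_le :: "nat \<Rightarrow> bool list \<Rightarrow> bool list \<Rightarrow> bool" where
  "bits_le m x y \<longleftrightarrow> (\<forall>i<m. x ! i \<longrightarrow> y ! i)"

lemma Tm_eq_bits_le:
  "Tm m x y = (if x \<in> idx m \<and> y \<in> idx m \<and> bits_le m y x then 1 else 0)"
proof -
  have "T0 (bit (x ! i)) (bit (y ! i)) = (if y ! i \<longrightarrow> x ! i then 1 else 0)" for i
    by (simp add: T0_def bit_def)
  then have "(\<Prod>i<m. T0 (bit (x ! i)) (bit (y ! i))) = (if bits_le m y x then 1 else 0)"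
    by (auto simp: bits_le_def)
  then show ?thesis
    by (simp add: Tm_def)
qed

definition perm_mat :: "nat \<Rightarrow> (bool list \<Rightarrow> bool list) \<Rightarrow> bool list \<Rightarrow> bool list \<Rightarrow> int" where
  "perm_mat m f = (\<lambda>x y. if x \<in> idx m \<and> y \<in> idx m \<and> x = f y then 1 else 0)"

lemma perm_mat_cong: "(\<And>y. y \<in> idx m \<Longrightarrow> f y = g y) \<Longrightarrow> perm_mat m f = perm_mat m g"
  by (auto simp: perm_mat_def fun_eq_iff)

lemma perm_mat_eqD:
  assumes "perm_mat m f = perm_mat m g" "f ` idx m \<subseteq> idx m" "y \<in> idx m"
  shows "f y = g y"
proof -
  have "f y \<in> idx m"
    using assms(2,3) by blast
  then have "perm_mat m f (f y) y = 1"
    using assms(3) by (simp add: perm_mat_def)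
  then have "perm_mat m g (f y) y = 1"
    using assms(1) by simp
  then show ?thesis
    by (simp add: perm_mat_def split: if_splits)
qed

lemma perm_matrix_perm_mat:
  assumes "bij_betw f (idx m) (idx m)"
  shows "perm_matrix m (perm_mat m f)"
  unfolding perm_matrix_def
proof (intro conjI allI ballI impI)
  fix x y
  show "perm_mat m f x y = 0 \<or> perm_mat m f x y = 1"
    by (simp add: perm_mat_def)
next
  fix x y assume "\<not> (x \<in> idx m \<and> y \<in> idx m)"
  then show "perm_mat m f x y = 0"
    by (auto simp: perm_mat_def)
next
  fix x assume "x \<in> idx m"
  then have "x \<in> f ` idx m"
    using assms by (simp add: bij_betw_def)
  then obtain y where y: "y \<in> idx m" "x = f y"
    by auto
  show "\<exists>!y. y \<in> idx m \<and> perm_mat m f x y = 1"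
  proof (rule ex1I[of _ y])
    show "y \<in> idx m \<and> perm_mat m f x y = 1"
      using y \<open>x \<in> idx m\<close> by (simp add: perm_mat_def)
    fix z assume "z \<in> idx m \<and> perm_mat m f x z = 1"
    then have "z \<in> idx m" "f z = f y"
      using y by (simp_all add: perm_mat_def split: if_splits)
    then show "z = y"
      using bij_betw_imp_inj_on[OF assms] y(1) by (simp add: inj_on_eq_iff)
  qed
next
  fix y assume "y \<in> idx m"
  then have "f y \<in> idx m"
    using assms bij_betwE by blast
  show "\<exists>!x. x \<in> idx m \<and> perm_mat m f x y = 1"
  proof (rule ex1I[of _ "f y"])
    show "f y \<in> idx m \<and> perm_mat m f (f y) y = 1"
      using \<open>f y \<in> idx m\<close> \<open>y \<in> idx m\<close> by (simp add: perm_mat_def)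
    show "x = f y" if "x \<in> idx m \<and> perm_mat m f x y = 1" for x
      using that by (simp add: perm_mat_def split: if_splits)
  qed
qed

lemma perm_matrixE:
  assumes "perm_matrix m P"
  obtains f where "bij_betw f (idx m) (idx m)" "P = perm_mat m f"
proof -
  have entries: "P x y = 0 \<or> P x y = 1" "\<not> (x \<in> idx m \<and> y \<in> idx m) \<Longrightarrow> P x y = 0" for x y
    using assms unfolding perm_matrix_def by blast+
  have row: "\<exists>!y. y \<in> idx m \<and> P x y = 1" if "x \<in> idx m" for x
    using assms that unfolding perm_matrix_def by blast
  have col: "\<exists>!x. x \<in> idx m \<and> P x y = 1" if "y \<in> idx m" for y
    using assms that unfolding perm_matrix_def by blast
  define f where "f y = (THE x. x \<in> idx m \<and> P x y = 1)" for y
  have f: "f y \<in> idx m" "P (f y) y = 1" if "y \<in> idx m" for y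
    using theI'[OF col[OF that]] unfolding f_def by blast+
  have f_unique: "x = f y" if "y \<in> idx m" "x \<in> idx m" "P x y = 1" for x y
    using col[OF that(1)] f[OF that(1)] that(2,3) by blast
  have "P x y = perm_mat m f x y" for x y
  proof (cases "x \<in> idx m \<and> y \<in> idx m")
    case True
    then show ?thesis
      using entries(1)[of x y] f f_unique by (auto simp: perm_mat_def)
  next
    case False
    then show ?thesis
      using entries(2)[OF False] by (auto simp: perm_mat_def)
  qed
  then have P: "P = perm_mat m f"
    by (simp add: fun_eq_iff)
  have "inj_on f (idx m)"
  proof (rule inj_onI)
    fix a b assume "a \<in> idx m" "b \<in> idx m" "f a = f b"
    then show "a = b"
      using row[of "f a"] f[of a] f[of b] by auto
  qed
  moreover have "f ` idx m \<subseteq> idx m"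
    using f(1) by blast
  ultimately have "bij_betw f (idx m) (idx m)"
    using endo_inj_surj[OF finite_idx] by (simp add: bij_betw_def)
  then show ?thesis
    using P by (rule that)
qed

lemma sum_idx_delta:
  assumes "c \<in> idx m"
  shows "(\<Sum>z\<in>idx m. A z * (if z = c then 1 else 0)) = (A c :: 'a :: semiring_1)"
  using assms finite_idx by (simp add: if_distrib[of "(*) _"] cong: if_cong)

lemma mmul_perm_mat:
  assumes "g ` idx m \<subseteq> idx m"
  shows "mmul m (perm_mat m f) (perm_mat m g) = perm_mat m (f \<circ> g)"
proof (intro ext)
  fix x y
  show "mmul m (perm_mat m f) (perm_mat m g) x y = perm_mat m (f \<circ> g) x y"
  proof (cases "x \<in> idx m \<and> y \<in> idx m")
    case True
    then have "g y \<in> idx m"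
      using assms by blast
    have "mmul m (perm_mat m f) (perm_mat m g) x y
        = (\<Sum>z\<in>idx m. perm_mat m f x z * (if z = g y then 1 else 0))"
      using True by (auto simp: mmul_def perm_mat_def intro!: sum.cong)
    also have "\<dots> = perm_mat m f x (g y)"
      using sum_idx_delta[OF \<open>g y \<in> idx m\<close>] .
    finally show ?thesis
      using True \<open>g y \<in> idx m\<close> by (simp add: perm_mat_def)
  qed (auto simp: mmul_def perm_mat_def)
qed

lemma mtrans_perm_mat_mmul:
  assumes "f ` idx m \<subseteq> idx m"
  shows "mmul m (mtrans (perm_mat m f)) (mmul m T (perm_mat m f))
       = (\<lambda>x y. if x \<in> idx m \<and> y \<in> idx m then T (f x) (f y) else 0)"
proof (intro ext)
  fix x y
  show "mmul m (mtrans (perm_mat m f)) (mmul m T (perm_mat m f)) x y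
      = (if x \<in> idx m \<and> y \<in> idx m then T (f x) (f y) else 0)"
  proof (cases "x \<in> idx m \<and> y \<in> idx m")
    case True
    then have "f x \<in> idx m" "f y \<in> idx m"
      using assms by blast+
    have TP: "mmul m T (perm_mat m f) z y = T z (f y)" if "z \<in> idx m" for z
    proof -
      have "mmul m T (perm_mat m f) z y = (\<Sum>w\<in>idx m. T z w * (if w = f y then 1 else 0))"
        using True that by (auto simp: mmul_def perm_mat_def intro!: sum.cong)
      also have "\<dots> = T z (f y)"
        using sum_idx_delta[OF \<open>f y \<in> idx m\<close>] .
      finally show ?thesis .
    qed
    have "mmul m (mtrans (perm_mat m f)) (mmul m T (perm_mat m f)) x y
        = (\<Sum>z\<in>idx m. T z (f y) * (if z = f x then 1 else 0))"
      using True TP by (auto simp: mmul_def perm_mat_def mtrans_def intro!: sum.cong)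
    also have "\<dots> = T (f x) (f y)"
      using sum_idx_delta[OF \<open>f x \<in> idx m\<close>] .
    finally show ?thesis
      using True by simp
  qed (auto simp: mmul_def)
qed

lemma perm_mat_in_Aut_iff:
  assumes f: "bij_betw f (idx m) (idx m)"
    and T: "\<And>x y. \<not> (x \<in> idx m \<and> y \<in> idx m) \<Longrightarrow> T x y = 0"
  shows "perm_mat m f \<in> Aut m T \<longleftrightarrow> (\<forall>x\<in>idx m. \<forall>y\<in>idx m. T (f x) (f y) = T x y)"
proof -
  have "f ` idx m \<subseteq> idx m"
    using f bij_betw_imp_surj_on by blast
  then have "perm_mat m f \<in> Aut m T
      \<longleftrightarrow> (\<lambda>x y. if x \<in> idx m \<and> y \<in> idx m then T (f x) (f y) else 0) = T"
    using perm_matrix_perm_mat[OF f] by (simp add: Aut_def mtrans_perm_mat_mmul)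
  also have "\<dots> \<longleftrightarrow> (\<forall>x\<in>idx m. \<forall>y\<in>idx m. T (f x) (f y) = T x y)"
    using T by (auto simp: fun_eq_iff)
  finally show ?thesis .
qed

definition cube_order_aut :: "nat \<Rightarrow> (bool list \<Rightarrow> bool list) \<Rightarrow> bool" where
  "cube_order_aut m h \<longleftrightarrow> bij_betw h (idx m) (idx m)
     \<and> (\<forall>x\<in>idx m. \<forall>y\<in>idx m. bits_le m (h x) (h y) \<longleftrightarrow> bits_le m x y)"

lemma perm_mat_in_Aut_Tm_iff:
  assumes "bij_betw f (idx m) (idx m)"
  shows "perm_mat m f \<in> Aut m (Tm m) \<longleftrightarrow> cube_order_aut m f"
proof -
  have "f x \<in> idx m" if "x \<in> idx m" for x
    using assms that bij_betwE by blast
  then have Tm_iff: "Tm m (f x) (f y) = Tm m x y \<longleftrightarrow> (bits_le m (f y) (f x) \<longleftrightarrow> bits_le m y x)"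
    if "x \<in> idx m" "y \<in> idx m" for x y
    using that by (auto simp: Tm_eq_bits_le)
  have "perm_mat m f \<in> Aut m (Tm m) \<longleftrightarrow> (\<forall>x\<in>idx m. \<forall>y\<in>idx m. Tm m (f x) (f y) = Tm m x y)"
    by (rule perm_mat_in_Aut_iff[OF assms]) (auto simp: Tm_def)
  also have "\<dots> \<longleftrightarrow> (\<forall>x\<in>idx m. \<forall>y\<in>idx m. bits_le m (f x) (f y) \<longleftrightarrow> bits_le m x y)"
  proof
    assume eq: "\<forall>x\<in>idx m. \<forall>y\<in>idx m. Tm m (f x) (f y) = Tm m x y"
    show "\<forall>x\<in>idx m. \<forall>y\<in>idx m. bits_le m (f x) (f y) \<longleftrightarrow> bits_le m x y"
      using eq Tm_iff by simp
  next
    assume le: "\<forall>x\<in>idx m. \<forall>y\<in>idx m. bits_le m (f x) (f y) \<longleftrightarrow> bits_le m x y"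
    show "\<forall>x\<in>idx m. \<forall>y\<in>idx m. Tm m (f x) (f y) = Tm m x y"
      using le Tm_iff by simp
  qed
  finally show ?thesis
    by (simp only: cube_order_aut_def assms simp_thms)
qed

abbreviation zero_vec :: "nat \<Rightarrow> bool list" where
  "zero_vec m \<equiv> replicate m False"

definition unit_vec :: "nat \<Rightarrow> nat \<Rightarrow> bool list" where
  "unit_vec m j = map (\<lambda>i. i = j) [0..<m]"

lemma unit_vec_idx [simp]: "unit_vec m j \<in> idx m"
  by (simp add: unit_vec_def idx_def)

lemma unit_vec_nth: "i < m \<Longrightarrow> unit_vec m j ! i = (i = j)"
  by (simp add: unit_vec_def)

lemma unit_vec_neq_zero_vec: "j < m \<Longrightarrow> unit_vec m j \<noteq> zero_vec m"
  by (metis nth_replicate unit_vec_nth)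

lemma unit_vec_inject: "a < m \<Longrightarrow> unit_vec m a = unit_vec m b \<Longrightarrow> a = b"
  by (metis unit_vec_nth)

lemma zero_vec_idx [simp]: "zero_vec m \<in> idx m"
  by (simp add: idx_def)

lemma bits_le_zero_vec: "bits_le m (zero_vec m) x"
  by (simp add: bits_le_def)

lemma bits_le_zero_vec_iff: "x \<in> idx m \<Longrightarrow> bits_le m x (zero_vec m) \<longleftrightarrow> x = zero_vec m"
  unfolding bits_le_def idx_def by (auto simp: list_eq_iff_nth_eq)

lemma bits_le_unit_vec: "j < m \<Longrightarrow> bits_le m (unit_vec m j) x \<longleftrightarrow> x ! j"
  by (auto simp: bits_le_def unit_vec_nth)

lemma bits_le_unit_vecD:
  assumes "x \<in> idx m" "bits_le m x (unit_vec m j)"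
  shows "x = zero_vec m \<or> x = unit_vec m j"
proof (cases "j < m \<and> x ! j")
  case True
  then have "x ! i = (i = j)" if "i < m" for i
    using assms(2) that by (auto simp: bits_le_def unit_vec_nth)
  then have "x = unit_vec m j"
    using assms(1) by (simp add: list_eq_iff_nth_eq idx_def unit_vec_def)
  then show ?thesis ..
next
  case False
  then have "\<not> x ! i" if "i < m" for i
    using assms(2) that by (auto simp: bits_le_def unit_vec_nth)
  then have "x = zero_vec m"
    using assms(1) by (simp add: list_eq_iff_nth_eq idx_def)
  then show ?thesis ..
qed

lemma ex_nth_if_neq_zero_vec:
  assumes "x \<in> idx m" "x \<noteq> zero_vec m"
  shows "\<exists>k<m. x ! k"
proof (rule ccontr)
  assume "\<not> (\<exists>k<m. x ! k)"
  then have "x = zero_vec m"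
    using assms(1) by (auto simp: idx_def intro!: nth_equalityI)
  with assms(2) show False ..
qed

lemma
  assumes "cube_order_aut m h"
  shows cube_order_aut_bij: "bij_betw h (idx m) (idx m)"
    and cube_order_aut_idx: "x \<in> idx m \<Longrightarrow> h x \<in> idx m"
    and cube_order_aut_bits_le:
      "x \<in> idx m \<Longrightarrow> y \<in> idx m \<Longrightarrow> bits_le m (h x) (h y) \<longleftrightarrow> bits_le m x y"
  using assms bij_betwE unfolding cube_order_aut_def by blast+

lemma cube_order_aut_zero_vec:
  assumes h: "cube_order_aut m h"
  shows "h (zero_vec m) = zero_vec m"
proof -
  have "zero_vec m \<in> h ` idx m"
    using cube_order_aut_bij[OF h] by (simp add: bij_betw_def)
  then obtain v where "v \<in> idx m" "h v = zero_vec m"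
    by (metis imageE)
  then have "bits_le m (h (zero_vec m)) (zero_vec m)"
    using cube_order_aut_bits_le[OF h zero_vec_idx] bits_le_zero_vec by metis
  then show ?thesis
    using bits_le_zero_vec_iff cube_order_aut_idx[OF h] by simp
qed

lemma cube_order_aut_unit_vec:
  assumes h: "cube_order_aut m h" and "j < m"
  shows "\<exists>k<m. h (unit_vec m k) = unit_vec m j"
proof -
  have h_inj: "x = y" if "h x = h y" "x \<in> idx m" "y \<in> idx m" for x y
    using inj_onD[OF bij_betw_imp_inj_on[OF cube_order_aut_bij[OF h]]] that .
  have "unit_vec m j \<in> h ` idx m"
    using cube_order_aut_bij[OF h] by (simp add: bij_betw_def)
  then obtain v where v: "v \<in> idx m" "h v = unit_vec m j"
    by (metis imageE)
  have "v \<noteq> zero_vec m"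
  proof
    assume "v = zero_vec m"
    then have "unit_vec m j = zero_vec m"
      using v(2) cube_order_aut_zero_vec[OF h] by simp
    then show False
      using unit_vec_neq_zero_vec[OF \<open>j < m\<close>] by contradiction
  qed
  then obtain k where "k < m" "v ! k"
    using ex_nth_if_neq_zero_vec v(1) by blast
  then have "bits_le m (unit_vec m k) v"
    by (simp add: bits_le_unit_vec)
  then have "bits_le m (h (unit_vec m k)) (unit_vec m j)"
    using cube_order_aut_bits_le[OF h unit_vec_idx v(1)] v(2) by simp
  moreover have "h (unit_vec m k) \<noteq> zero_vec m"
  proof
    assume "h (unit_vec m k) = zero_vec m"
    then have "h (unit_vec m k) = h (zero_vec m)"
      using cube_order_aut_zero_vec[OF h] by simp
    then have "unit_vec m k = zero_vec m"
      by (rule h_inj) simp_all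
    then show False
      using unit_vec_neq_zero_vec[OF \<open>k < m\<close>] by contradiction
  qed
  ultimately have "h (unit_vec m k) = unit_vec m j"
    using bits_le_unit_vecD[OF cube_order_aut_idx[OF h unit_vec_idx]] by auto
  then show ?thesis
    using \<open>k < m\<close> by blast
qed

text \<open>Bit j of x says whether the atom unit_vec m j lies below x, so permuting the atoms
  permutes the coordinates.\<close>

lemma cube_order_aut_permutes_coords:
  assumes h: "cube_order_aut m h"
  obtains \<tau> where "\<tau> permutes {..<m}" "\<And>x j. x \<in> idx m \<Longrightarrow> j < m \<Longrightarrow> h x ! j = x ! \<tau> j"
proof -
  define \<tau> where "\<tau> j = (if j < m then SOME k. k < m \<and> h (unit_vec m k) = unit_vec m j else j)" for j
  have \<tau>: "\<tau> j < m \<and> h (unit_vec m (\<tau> j)) = unit_vec m j" if "j < m" for j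
    using someI_ex[OF cube_order_aut_unit_vec[OF h that]] that by (simp add: \<tau>_def)
  have "inj_on \<tau> {..<m}"
  proof (rule inj_onI)
    fix a b assume "a \<in> {..<m}" "b \<in> {..<m}" "\<tau> a = \<tau> b"
    then show "a = b"
      using \<tau> unit_vec_inject by (metis lessThan_iff)
  qed
  then have "\<tau> permutes {..<m}"
    using \<tau> by (intro inj_imp_permutes) (auto simp: \<tau>_def)
  moreover have "h x ! j = x ! \<tau> j" if "x \<in> idx m" "j < m" for x j
  proof -
    have "h x \<in> idx m"
      using cube_order_aut_idx[OF h that(1)] .
    then have "h x ! j = bits_le m (h (unit_vec m (\<tau> j))) (h x)"
      using \<tau> bits_le_unit_vec that(2) by simp
    also have "\<dots> = bits_le m (unit_vec m (\<tau> j)) x"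
      using cube_order_aut_bits_le[OF h] that(1) by simp
    also have "\<dots> = x ! \<tau> j"
      using \<tau> bits_le_unit_vec that(2) by simp
    finally show ?thesis .
  qed
  ultimately show ?thesis
    using that by blast
qed

text \<open>The permutation \<sigma> acts on the positions 1..m, whereas list positions are 0-based.\<close>

definition permute_coords :: "nat \<Rightarrow> (nat \<Rightarrow> nat) \<Rightarrow> bool list \<Rightarrow> bool list" where
  "permute_coords m \<sigma> x = map (\<lambda>i. x ! (\<sigma> i - 1)) [1..<m+1]"

lemma Psig_eq_perm_mat: "Psig m \<sigma> = perm_mat m (permute_coords m \<sigma>)"
  by (auto simp: Psig_def perm_mat_def permute_coords_def fun_eq_iff)

lemma length_permute_coords [simp]: "length (permute_coords m \<sigma> x) = m"
  by (simp add: permute_coords_def)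

lemma permute_coords_idx [simp]: "permute_coords m \<sigma> x \<in> idx m"
  by (simp add: idx_def)

lemma permute_coords_nth: "j < m \<Longrightarrow> permute_coords m \<sigma> x ! j = x ! (\<sigma> (Suc j) - 1)"
  by (simp add: permute_coords_def del: upt_Suc)

lemma permutes_Suc_range: "\<sigma> permutes {1..m} \<Longrightarrow> j < m \<Longrightarrow> \<sigma> (Suc j) \<in> {1..m}"
  using permutes_in_image[of \<sigma> "{1..m}" "Suc j"] by simp

lemma permute_coords_comp:
  assumes "\<sigma> permutes {1..m}"
  shows "permute_coords m \<sigma> (permute_coords m \<tau> x) = permute_coords m (\<tau> \<circ> \<sigma>) x"
proof (rule nth_equalityI)
  fix j assume "j < length (permute_coords m \<sigma> (permute_coords m \<tau> x))"
  then have "j < m"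
    using permute_coords_idx by (simp add: idx_def)
  moreover have "\<sigma> (Suc j) - 1 < m" "Suc (\<sigma> (Suc j) - 1) = \<sigma> (Suc j)"
    using permutes_Suc_range[OF assms \<open>j < m\<close>] by auto
  ultimately show "permute_coords m \<sigma> (permute_coords m \<tau> x) ! j = permute_coords m (\<tau> \<circ> \<sigma>) x ! j"
    by (simp add: permute_coords_nth)
qed (simp add: permute_coords_def)

lemma permute_coords_id: "x \<in> idx m \<Longrightarrow> permute_coords m id x = x"
  by (rule nth_equalityI) (auto simp: permute_coords_nth idx_def)

lemma bits_le_permute_coords:
  assumes "\<sigma> permutes {1..m}" "bits_le m x y"
  shows "bits_le m (permute_coords m \<sigma> x) (permute_coords m \<sigma> y)"
  unfolding bits_le_def
proof (intro allI impI)
  fix j assume "j < m" "permute_coords m \<sigma> x ! j"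
  moreover have "\<sigma> (Suc j) - 1 < m"
    using permutes_Suc_range[OF assms(1) \<open>j < m\<close>] by auto
  ultimately show "permute_coords m \<sigma> y ! j"
    using assms(2) by (simp add: bits_le_def permute_coords_nth)
qed

lemma cube_order_aut_permute_coords:
  assumes \<sigma>: "\<sigma> permutes {1..m}"
  shows "cube_order_aut m (permute_coords m \<sigma>)"
proof -
  have \<sigma>': "inv' \<sigma> permutes {1..m}"
    using permutes_inv[OF \<sigma>] .
  have inverse: "permute_coords m (inv' \<sigma>) (permute_coords m \<sigma> x) = x"
    "permute_coords m \<sigma> (permute_coords m (inv' \<sigma>) x) = x" if "x \<in> idx m" for x
    using permute_coords_comp[OF \<sigma>'] permute_coords_comp[OF \<sigma>] permute_coords_id[OF that]
    by (simp_all add: permutes_inv_o[OF \<sigma>])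
  have "bij_betw (permute_coords m \<sigma>) (idx m) (idx m)"
    by (rule bij_betw_byWitness[where f' = "permute_coords m (inv' \<sigma>)"]) (use inverse in auto)
  moreover have "bits_le m x y"
    if "x \<in> idx m" "y \<in> idx m" "bits_le m (permute_coords m \<sigma> x) (permute_coords m \<sigma> y)" for x y
    using bits_le_permute_coords[OF \<sigma>' that(3)] inverse that(1,2) by simp
  ultimately show ?thesis
    using bits_le_permute_coords[OF \<sigma>] unfolding cube_order_aut_def by blast
qed

lemma cube_order_aut_eq_permute_coords:
  assumes h: "cube_order_aut m h"
  obtains \<sigma> where "\<sigma> permutes {1..m}" "\<And>x. x \<in> idx m \<Longrightarrow> h x = permute_coords m \<sigma> x"
proof -
  obtain \<tau> where \<tau>: "\<tau> permutes {..<m}" "\<And>x j. x \<in> idx m \<Longrightarrow> j < m \<Longrightarrow> h x ! j = x ! \<tau> j"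
    using cube_order_aut_permutes_coords[OF h] by blast
  define \<sigma> where "\<sigma> = map_permutation {..<m} Suc \<tau>"
  have "\<sigma> permutes {1..m}"
    unfolding \<sigma>_def image_Suc_lessThan[symmetric]
    by (rule map_permutation_permutes[OF _ \<tau>(1)]) (simp add: bij_betw_def)
  moreover have "\<sigma> (Suc j) = Suc (\<tau> j)" if "j < m" for j
    unfolding \<sigma>_def using that by (simp add: map_permutation_apply)
  then have "h x = permute_coords m \<sigma> x" if "x \<in> idx m" for x
    using that cube_order_aut_idx[OF h that]
    by (intro nth_equalityI) (auto simp: idx_def permute_coords_nth \<tau>(2))
  ultimately show ?thesis
    using that by blast
qed

lemma permute_coords_inject:
  assumes \<sigma>: "\<sigma> permutes {1..m}" and \<tau>: "\<tau> permutes {1..m}"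
    and eq: "\<And>x. x \<in> idx m \<Longrightarrow> permute_coords m \<sigma> x = permute_coords m \<tau> x"
  shows "\<sigma> = \<tau>"
proof
  fix k
  show "\<sigma> k = \<tau> k"
  proof (cases "k \<in> {1..m}")
    case True
    define j where "j = k - 1"
    have j: "j < m" "k = Suc j"
      using True by (auto simp: j_def)
    have range: "\<sigma> k \<in> {1..m}" "\<tau> k \<in> {1..m}"
      using permutes_Suc_range[OF \<sigma> j(1)] permutes_Suc_range[OF \<tau> j(1)] j(2) by simp_all
    then have "\<sigma> k - 1 < m" "\<tau> k - 1 < m"
      by auto
    have "permute_coords m \<sigma> (unit_vec m (\<sigma> k - 1)) ! j"
      using j \<open>\<sigma> k - 1 < m\<close> by (simp add: permute_coords_nth unit_vec_nth)
    then have "permute_coords m \<tau> (unit_vec m (\<sigma> k - 1)) ! j"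
      using eq[OF unit_vec_idx] by simp
    then have "\<tau> k - 1 = \<sigma> k - 1"
      using j \<open>\<tau> k - 1 < m\<close> by (simp add: permute_coords_nth unit_vec_nth)
    moreover have "1 \<le> \<sigma> k" "1 \<le> \<tau> k"
      using range by simp_all
    ultimately show ?thesis
      by arith
  qed (simp add: permutes_not_in[OF \<sigma>] permutes_not_in[OF \<tau>])
qed

lemma Aut_Tm_eq_Psig_image: "Aut m (Tm m) = Psig m ` {\<sigma>. \<sigma> permutes {1..m}}"
proof (intro equalityI subsetI)
  fix P assume "P \<in> Psig m ` {\<sigma>. \<sigma> permutes {1..m}}"
  then obtain \<sigma> where "\<sigma> permutes {1..m}" "P = perm_mat m (permute_coords m \<sigma>)"
    by (auto simp: Psig_eq_perm_mat)
  moreover have "cube_order_aut m (permute_coords m \<sigma>)"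
    using cube_order_aut_permute_coords[OF \<open>\<sigma> permutes {1..m}\<close>] .
  ultimately show "P \<in> Aut m (Tm m)"
    using perm_mat_in_Aut_Tm_iff[OF cube_order_aut_bij] by simp
next
  fix P assume P: "P \<in> Aut m (Tm m)"
  then obtain f where f: "bij_betw f (idx m) (idx m)" "P = perm_mat m f"
    using perm_matrixE by (auto simp: Aut_def)
  then have "cube_order_aut m f"
    using P perm_mat_in_Aut_Tm_iff by simp
  then obtain \<sigma> where \<sigma>: "\<sigma> permutes {1..m}" "\<And>x. x \<in> idx m \<Longrightarrow> f x = permute_coords m \<sigma> x"
    using cube_order_aut_eq_permute_coords by blast
  have "P = Psig m \<sigma>"
    unfolding f(2) Psig_eq_perm_mat by (rule perm_mat_cong[OF \<sigma>(2)])
  then show "P \<in> Psig m ` {\<sigma>. \<sigma> permutes {1..m}}"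
    using \<sigma>(1) by (intro image_eqI) simp_all
qed

lemma inj_on_Psig: "inj_on (Psig m) {\<sigma>. \<sigma> permutes {1..m}}"
proof (rule inj_onI)
  fix \<sigma> \<tau> assume "\<sigma> \<in> {\<sigma>. \<sigma> permutes {1..m}}" "\<tau> \<in> {\<sigma>. \<sigma> permutes {1..m}}" "Psig m \<sigma> = Psig m \<tau>"
  then show "\<sigma> = \<tau>"
    using perm_mat_eqD permute_coords_inject by (simp add: Psig_eq_perm_mat image_subset_iff)
qed

lemma mmul_Psig:
  assumes "\<sigma> permutes {1..m}"
  shows "mmul m (Psig m \<sigma>) (Psig m \<tau>) = Psig m (\<tau> \<circ> \<sigma>)"
proof -
  have "mmul m (Psig m \<sigma>) (Psig m \<tau>) = perm_mat m (permute_coords m \<sigma> \<circ> permute_coords m \<tau>)"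
    unfolding Psig_eq_perm_mat by (rule mmul_perm_mat) auto
  also have "\<dots> = Psig m (\<tau> \<circ> \<sigma>)"
    unfolding Psig_eq_perm_mat by (rule perm_mat_cong) (simp add: permute_coords_comp[OF assms])
  finally show ?thesis .
qed

text \<open>Since \<sigma> \<mapsto> Psig m \<sigma> reverses products, the isomorphism is \<sigma> \<mapsto> Psig m (inv' \<sigma>).\<close>

lemma Aut_group_iso_sym_group: "Aut_group m (Tm m) \<cong> sym_group m"
proof -
  define \<phi> where "\<phi> = Psig m \<circ> inv'"
  have "\<phi> \<in> hom (sym_group m) (Aut_group m (Tm m))"
  proof (rule homI)
    fix \<sigma> \<tau> assume "\<sigma> \<in> carrier (sym_group m)" "\<tau> \<in> carrier (sym_group m)"
    then have \<sigma>: "\<sigma> permutes {1..m}" and \<tau>: "\<tau> permutes {1..m}"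
      by (simp_all add: sym_group_carrier)
    show "\<phi> \<sigma> \<in> carrier (Aut_group m (Tm m))"
      using permutes_inv[OF \<sigma>] by (simp add: \<phi>_def Aut_group_def Aut_Tm_eq_Psig_image)
    have "inv' (\<sigma> \<circ> \<tau>) = inv' \<tau> \<circ> inv' \<sigma>"
      using o_inv_distrib[OF permutes_bij[OF \<sigma>] permutes_bij[OF \<tau>]] .
    then show "\<phi> (\<sigma> \<otimes>\<^bsub>sym_group m\<^esub> \<tau>) = \<phi> \<sigma> \<otimes>\<^bsub>Aut_group m (Tm m)\<^esub> \<phi> \<tau>"
      using mmul_Psig[OF permutes_inv[OF \<sigma>]] by (simp add: \<phi>_def Aut_group_def sym_group_mult)
  qed
  moreover have "bij_betw \<phi> (carrier (sym_group m)) (carrier (Aut_group m (Tm m)))"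
    unfolding \<phi>_def
  proof (rule bij_betw_trans)
    show "bij_betw inv' (carrier (sym_group m)) {\<sigma>. \<sigma> permutes {1..m}}"
      by (rule bij_betw_byWitness[where f' = inv'])
        (auto simp: sym_group_carrier permutes_inv permutes_inv_inv)
    show "bij_betw (Psig m) {\<sigma>. \<sigma> permutes {1..m}} (carrier (Aut_group m (Tm m)))"
      using inj_on_Psig by (simp add: bij_betw_def Aut_group_def Aut_Tm_eq_Psig_image)
  qed
  ultimately have "sym_group m \<cong> Aut_group m (Tm m)"
    by (intro is_isoI isoI)
  then show ?thesis
    by (rule group.iso_sym[OF sym_group_is_group])
qed

theorem mainTheorem12:
  fixes m :: nat
  shows "Aut m (Tm m) = {Psig m \<sigma> | \<sigma>. \<sigma> permutes {1..m}}
         \<and> Aut_group m (Tm m) \<cong> sym_group m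
         \<and> card (Aut m (Tm m)) = fact m"
proof (intro conjI)
  show "Aut m (Tm m) = {Psig m \<sigma> | \<sigma>. \<sigma> permutes {1..m}}"
    using Aut_Tm_eq_Psig_image by blast
  show iso: "Aut_group m (Tm m) \<cong> sym_group m"
    by (rule Aut_group_iso_sym_group)
  show "card (Aut m (Tm m)) = fact m"
    using iso_same_card[OF iso] by (simp add: Aut_group_def sym_group_card_carrier)
qed

end
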